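(* Let $\hat v\in\{0,1\}^{\mathcal T}$ be the indicator vector of a proper triple set. Then the linear program $\mathrm{D}(\hat v)$ has an optimal solution $(\lambda,\mu)$ with $\lambda_{t,1}=\lambda_{t,2}=\lambda_{t,3}=0$ for every $t\in\mathcal T$ with $\hat v_t=0$.
   Context: A multilinear program has data $n,m$, coefficients $\alpha_i\in\mathbb{R}$ and nonempty index sets $J_i\subseteq[n]$. Let $\mathcal N=\bigcup_i\{J:\emptyset\ne J\subseteq J_i\}$ and $\beta_J=\sum_{i:J_i=J}\alpha_i$. A triple is $t=(J,J',J'')$ with $J''\in\mathcal N$, $|J''|\ge2$, $J,J'$ nonempty, disjoint, $J\cup J'=J''$, listed with $J,J'$ in lexicographic order; $\mathsf{tail1}(t)=J$, $\mathsf{tail2}(t)=J'$, $\mathsf{head}(t)=J''$; $\mathcal T$ is the set of all triples. A proper triple set is a set $T\subseteq\mathcal T$ containing a subset $T'$ such that (1) every $J_i$ with $|J_i|>1$ is the head of some triple in $T'$, and (2) whenever a set $J$ with $|J|>1$ is the first or second element of a triple in $T'$, $J$ is the head of a different triple in $T'$; its indicator vector has $\hat v_t=1$ iff $t\in T$. $\mathrm{D}(\hat v)$: maximize $-\sum_{t\in\mathcal T}[(1-\hat v_t)(\lambda_{t,1}+\lambda_{t,2})+(2-\hat v_t)\lambda_{t,3}]-\sum_{J\in\mathcal N}\mu_J$ over $\lambda\ge0,\mu\ge0$ subject to, for every $J\in\mathcal N$, $\beta_J+\sum_{t:\mathsf{tail1}(t)=J}(-\lambda_{t,1}+\lambda_{t,3})+\sum_{t:\mathsf{tail2}(t)=J}(-\lambda_{t,2}+\lambda_{t,3})+\sum_{t:\mathsf{head}(t)=J}(\lambda_{t,1}+\lambda_{t,2}-\lambda_{t,3})+\mu_J\ge0$.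 *)

theory Defs
  imports Complex_Main "HOL-Library.List_Lexorder"
begin

text \<open>Multilinear program data: m monomials, coefficients alpha i and index sets Js i
  (for i in {1..m}), each a nonempty subset of [n] = {1..n}.\<close>

type_synonym triple = "nat set \<times> nat set \<times> nat set"

definition NN :: "nat \<Rightarrow> (nat \<Rightarrow> nat set) \<Rightarrow> nat set set" where
  "NN m Js = (\<Union>i\<in>{1..m}. {J. J \<noteq> {} \<and> J \<subseteq> Js i})"

definition beta :: "nat \<Rightarrow> (nat \<Rightarrow> real) \<Rightarrow> (nat \<Rightarrow> nat set) \<Rightarrow> nat set \<Rightarrow> real" where
  "beta m alpha Js J = (\<Sum>i\<in>{i\<in>{1..m}. Js i = J}. alpha i)"

definition lex_less :: "nat set \<Rightarrow> nat set \<Rightarrow> bool" where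
  "lex_less J J' = (sorted_list_of_set J < sorted_list_of_set J')"

definition tail1 :: "triple \<Rightarrow> nat set" where "tail1 t = fst t"
definition tail2 :: "triple \<Rightarrow> nat set" where "tail2 t = fst (snd t)"
definition head :: "triple \<Rightarrow> nat set" where "head t = snd (snd t)"

definition triples :: "nat \<Rightarrow> (nat \<Rightarrow> nat set) \<Rightarrow> triple set" where
  "triples m Js = {(J, J', J''). J'' \<in> NN m Js \<and> card J'' \<ge> 2 \<and> J \<noteq> {} \<and> J' \<noteq> {}
      \<and> J \<inter> J' = {} \<and> J \<union> J' = J'' \<and> lex_less J J'}"

definition proper_triple_set :: "nat \<Rightarrow> (nat \<Rightarrow> nat set) \<Rightarrow> triple set \<Rightarrow> bool" where
  "proper_triple_set m Js T \<longleftrightarrow> T \<subseteq> triples m Js \<and>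
     (\<exists>T' \<subseteq> T.
        (\<forall>i\<in>{1..m}. card (Js i) > 1 \<longrightarrow> (\<exists>t\<in>T'. head t = Js i)) \<and>
        (\<forall>t\<in>T'. \<forall>J\<in>{tail1 t, tail2 t}. card J > 1 \<longrightarrow>
            (\<exists>t'\<in>T'. t' \<noteq> t \<and> head t' = J)))"

definition indicator_vec :: "triple set \<Rightarrow> triple \<Rightarrow> real" where
  "indicator_vec T t = (if t \<in> T then 1 else 0)"

definition D_obj :: "nat \<Rightarrow> (nat \<Rightarrow> nat set) \<Rightarrow> (triple \<Rightarrow> real) \<Rightarrow>
    (triple \<Rightarrow> real) \<Rightarrow> (triple \<Rightarrow> real) \<Rightarrow> (triple \<Rightarrow> real) \<Rightarrow> (nat set \<Rightarrow> real) \<Rightarrow> real" where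
  "D_obj m Js v l1 l2 l3 mu =
     - (\<Sum>t\<in>triples m Js. (1 - v t) * (l1 t + l2 t) + (2 - v t) * l3 t)
     - (\<Sum>J\<in>NN m Js. mu J)"

definition D_feasible :: "nat \<Rightarrow> (nat \<Rightarrow> real) \<Rightarrow> (nat \<Rightarrow> nat set) \<Rightarrow>
    (triple \<Rightarrow> real) \<Rightarrow> (triple \<Rightarrow> real) \<Rightarrow> (triple \<Rightarrow> real) \<Rightarrow> (nat set \<Rightarrow> real) \<Rightarrow> bool" where
  "D_feasible m alpha Js l1 l2 l3 mu \<longleftrightarrow>
     (\<forall>t\<in>triples m Js. l1 t \<ge> 0 \<and> l2 t \<ge> 0 \<and> l3 t \<ge> 0) \<and>
     (\<forall>J\<in>NN m Js. mu J \<ge> 0) \<and>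
     (\<forall>J\<in>NN m Js.
        beta m alpha Js J
        + (\<Sum>t\<in>{t\<in>triples m Js. tail1 t = J}. - l1 t + l3 t)
        + (\<Sum>t\<in>{t\<in>triples m Js. tail2 t = J}. - l2 t + l3 t)
        + (\<Sum>t\<in>{t\<in>triples m Js. head t = J}. l1 t + l2 t - l3 t)
        + mu J \<ge> 0)"

definition D_optimal :: "nat \<Rightarrow> (nat \<Rightarrow> real) \<Rightarrow> (nat \<Rightarrow> nat set) \<Rightarrow> (triple \<Rightarrow> real) \<Rightarrow>
    (triple \<Rightarrow> real) \<Rightarrow> (triple \<Rightarrow> real) \<Rightarrow> (triple \<Rightarrow> real) \<Rightarrow> (nat set \<Rightarrow> real) \<Rightarrow> bool" where
  "D_optimal m alpha Js v l1 l2 l3 mu \<longleftrightarrow>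
     D_feasible m alpha Js l1 l2 l3 mu \<and>
     (\<forall>l1' l2' l3' mu'. D_feasible m alpha Js l1' l2' l3' mu' \<longrightarrow>
        D_obj m Js v l1' l2' l3' mu' \<le> D_obj m Js v l1 l2 l3 mu)"

end

(*
  D(v) is feasible (take lambda = 0 and mu_J = max 0 (- beta_J)) and, since
  v <= 1, its objective is nonpositive on feasible points; a linear program with finitely
  many constraints whose objective is bounded attains its optimum.  Take an optimal
  solution and, for every triple t outside T, move lambda_{t,1} + lambda_{t,2} onto
  mu_{head t} and lambda_{t,3} onto both mu_{tail1 t} and mu_{tail2 t}.  Each constraint
  of D(v) only gains nonnegative terms, and as v_t = 0 the objective loses
  lambda_{t,1} + lambda_{t,2} + 2 lambda_{t,3} in the first sum and regains exactly that
  in the sum over mu.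
*)
theory Submission
  imports Defs
begin

definition affine_comb :: "real \<Rightarrow> ('i \<Rightarrow> real) \<Rightarrow> ('i \<Rightarrow> real) \<Rightarrow> 'i \<Rightarrow> real" where
  "affine_comb t x y = (\<lambda>i. (1 - t) * x i + t * y i)"

definition affine_fun :: "(('i \<Rightarrow> real) \<Rightarrow> real) \<Rightarrow> bool" where
  "affine_fun g \<longleftrightarrow> (\<forall>x y t. g (affine_comb t x y) = (1 - t) * g x + t * g y)"

definition solution_set ::
    "((('i \<Rightarrow> real) \<Rightarrow> real) \<times> real) set \<Rightarrow> ((('i \<Rightarrow> real) \<Rightarrow> real) \<times> real) set \<Rightarrow> ('i \<Rightarrow> real) set" where
  "solution_set C E = {x. (\<forall>(g, b)\<in>C. b \<le> g x) \<and> (\<forall>(g, b)\<in>E. g x = b)}"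

lemma affine_fun_const: "affine_fun (\<lambda>x. c)"
  by (simp add: affine_fun_def algebra_simps)

lemma affine_fun_eval: "affine_fun (\<lambda>x. x i)"
  by (simp add: affine_fun_def affine_comb_def)

lemma affine_fun_add: "affine_fun g \<Longrightarrow> affine_fun h \<Longrightarrow> affine_fun (\<lambda>x. g x + h x)"
  by (simp add: affine_fun_def algebra_simps)

lemma affine_fun_diff: "affine_fun g \<Longrightarrow> affine_fun h \<Longrightarrow> affine_fun (\<lambda>x. g x - h x)"
  by (simp add: affine_fun_def algebra_simps)

lemma affine_fun_uminus: "affine_fun g \<Longrightarrow> affine_fun (\<lambda>x. - g x)"
  by (simp add: affine_fun_def algebra_simps)

lemma affine_fun_cmult: "affine_fun g \<Longrightarrow> affine_fun (\<lambda>x. c * g x)"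
  by (simp add: affine_fun_def ring_distribs mult.left_commute)

lemma affine_fun_sum: "(\<And>s. s \<in> A \<Longrightarrow> affine_fun (g s)) \<Longrightarrow> affine_fun (\<lambda>x. \<Sum>s\<in>A. g s x)"
  by (simp add: affine_fun_def sum.distrib sum_distrib_left)

lemmas affine_fun_intros =
  affine_fun_const affine_fun_eval affine_fun_add affine_fun_diff affine_fun_uminus
  affine_fun_cmult affine_fun_sum

lemma convex_bound_ge:
  fixes a b c t :: real
  assumes "b \<le> a" "b \<le> c" "0 \<le> t" "t \<le> 1"
  shows "b \<le> (1 - t) * a + t * c"
  using convex_bound_le[of "- a" "- b" "- c" "1 - t" t] assms by simp

lemma affine_fun_segment_ge:
  "affine_fun g \<Longrightarrow> b \<le> g x \<Longrightarrow> b \<le> g y \<Longrightarrow> 0 \<le> t \<Longrightarrow> t \<le> 1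
    \<Longrightarrow> b \<le> g (affine_comb t x y)"
  by (simp add: affine_fun_def convex_bound_ge)

lemma affine_fun_line_eq:
  assumes "affine_fun g" "g x = b" "g y = b"
  shows "g (affine_comb t x y) = b"
proof -
  have "g (affine_comb t x y) = (1 - t) * g x + t * g y"
    using assms(1) by (simp add: affine_fun_def)
  then show ?thesis
    using assms(2,3) by (simp add: algebra_simps)
qed

lemma solution_set_segment:
  assumes "\<forall>(g, b)\<in>C \<union> E. affine_fun g" "x \<in> solution_set C E" "y \<in> solution_set C E"
    and "0 \<le> t" "t \<le> 1"
  shows "affine_comb t x y \<in> solution_set C E"
  unfolding solution_set_def
proof (intro CollectI conjI ballI; clarify)
  fix g b
  assume "(g, b) \<in> C"
  then show "b \<le> g (affine_comb t x y)"
    using assms by (auto simp: solution_set_def intro!: affine_fun_segment_ge[of g])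
next
  fix g b
  assume "(g, b) \<in> E"
  then show "g (affine_comb t x y) = b"
    using assms by (auto simp: solution_set_def intro!: affine_fun_line_eq[of g])
qed

lemma solution_set_line:
  assumes "\<forall>(g, b)\<in>E. affine_fun g" "x \<in> solution_set {} E" "y \<in> solution_set {} E"
  shows "affine_comb t x y \<in> solution_set {} E"
  unfolding solution_set_def
proof (intro CollectI conjI ballI; clarify)
  fix g b
  assume "(g, b) \<in> E"
  then show "g (affine_comb t x y) = b"
    using assms by (auto simp: solution_set_def intro!: affine_fun_line_eq[of g])
qed

lemma affine_fun_bounded_below_const:
  assumes E: "\<forall>(g, b)\<in>E. affine_fun g" and f: "affine_fun f"
    and bounded: "\<forall>z\<in>solution_set {} E. L \<le> f z"
    and x: "x \<in> solution_set {} E" and y: "y \<in> solution_set {} E"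
  shows "f x \<le> f y"
proof (rule ccontr)
  assume "\<not> f x \<le> f y"
  define t where "t = (f x - L + 1) / (f x - f y)"
  let ?z = "affine_comb t x y"
  have "f ?z = f x - t * (f x - f y)"
    using f by (simp add: affine_fun_def algebra_simps)
  also have "t * (f x - f y) = f x - L + 1"
    using \<open>\<not> f x \<le> f y\<close> by (simp add: t_def)
  finally have "f ?z < L" by simp
  moreover have "?z \<in> solution_set {} E"
    using solution_set_line[OF E x y] .
  ultimately show False
    using bounded by fastforce
qed

lemma solution_set_face_below:
  assumes affine: "\<forall>(g', b')\<in>insert (g, b) C \<union> E. affine_fun g'" "affine_fun f"
    and y: "y \<in> solution_set (insert (g, b) C) E"
    and x: "x \<in> solution_set C E" "g x < b" "f x \<le> f y"
  shows "\<exists>z\<in>solution_set C (insert (g, b) E). f z \<le> f y"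
proof -
  have "b \<le> g y"
    using y by (simp add: solution_set_def)
  define t where "t = (g y - b) / (g y - g x)"
  let ?z = "affine_comb t y x"
  have t: "0 \<le> t" "t \<le> 1"
    using \<open>b \<le> g y\<close> \<open>g x < b\<close> by (auto simp: t_def divide_simps)
  have "y \<in> solution_set C E"
    using y by (simp add: solution_set_def)
  then have "?z \<in> solution_set C E"
    using solution_set_segment[OF _ _ x(1) t] affine(1) by blast
  moreover have "g ?z = g y - t * (g y - g x)"
    using affine(1) by (simp add: affine_fun_def algebra_simps)
  moreover have "t * (g y - g x) = g y - b"
    using \<open>b \<le> g y\<close> \<open>g x < b\<close> by (simp add: t_def)
  ultimately have "?z \<in> solution_set C (insert (g, b) E)"
    by (simp add: solution_set_def)
  moreover have "f ?z \<le> f y"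
    using affine_fun_segment_ge[of "\<lambda>x. - f x" "- f y" y x t] affine(2) x(3) t
    by (simp add: affine_fun_uminus)
  ultimately show ?thesis
    by blast
qed

text \<open>Induction on the inequality constraints: either a minimiser without the constraint
  \<open>(g, b)\<close> satisfies it, or every feasible point can be moved along a segment onto the face
  \<open>g = b\<close> without increasing \<open>f\<close>, and the face has a minimiser by induction.\<close>

lemma affine_fun_attains_min:
  assumes "finite C" "\<forall>(g, b)\<in>C \<union> E. affine_fun g" "affine_fun f"
    and "solution_set C E \<noteq> {}" "\<forall>x\<in>solution_set C E. L \<le> f x"
  shows "\<exists>x\<in>solution_set C E. \<forall>y\<in>solution_set C E. f x \<le> f y"
  using assms
proof (induction C arbitrary: E L rule: finite_induct)
  case empty
  then obtain x where "x \<in> solution_set {} E"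
    by blast
  moreover have "\<forall>y\<in>solution_set {} E. f x \<le> f y"
    using empty.prems affine_fun_bounded_below_const[of E f L x] \<open>x \<in> solution_set {} E\<close> by auto
  ultimately show ?case
    by blast
next
  case (insert k C)
  obtain g b where k: "k = (g, b)"
    by fastforce
  let ?P = "solution_set (insert k C) E"
  let ?P' = "solution_set C E"
  let ?F = "solution_set C (insert k E)"
  have "?F \<subseteq> ?P" "?P \<subseteq> ?P'"
    using k by (auto simp: solution_set_def)
  have via_face: "\<exists>x\<in>?P. \<forall>y\<in>?P. f x \<le> f y"
    if "x \<in> ?P'" "g x < b" "\<forall>y\<in>?P. f x \<le> f y" for x
  proof -
    have below: "\<exists>z\<in>?F. f z \<le> f y" if "y \<in> ?P" for y
      using solution_set_face_below[of g b C E f y x] insert.prems(1,2) k that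
        \<open>x \<in> ?P'\<close> \<open>g x < b\<close> \<open>\<forall>y\<in>?P. f x \<le> f y\<close> by simp
    then have "?F \<noteq> {}"
      using insert.prems(3) by blast
    moreover have "\<forall>z\<in>?F. L \<le> f z"
      using \<open>?F \<subseteq> ?P\<close> insert.prems(4) by blast
    ultimately obtain z where "z \<in> ?F" "\<forall>y\<in>?F. f z \<le> f y"
      using insert.IH[of "insert k E" L] insert.prems(1,2) by auto
    then show ?thesis
      using below \<open>?F \<subseteq> ?P\<close> by (meson order_trans subsetD)
  qed
  show ?case
  proof (cases "\<exists>L'. \<forall>x\<in>?P'. L' \<le> f x")
    case True
    then obtain L' where "\<forall>x\<in>?P'. L' \<le> f x"
      by blast
    moreover have "?P' \<noteq> {}"
      using insert.prems(3) \<open>?P \<subseteq> ?P'\<close> by blast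
    ultimately obtain x where x: "x \<in> ?P'" "\<forall>y\<in>?P'. f x \<le> f y"
      using insert.IH[of E L'] insert.prems(1,2) by auto
    show ?thesis
    proof (cases "b \<le> g x")
      case True
      then have "x \<in> ?P"
        using x(1) k by (simp add: solution_set_def)
      then show ?thesis
        using x(2) \<open>?P \<subseteq> ?P'\<close> by blast
    next
      case False
      moreover have "\<forall>y\<in>?P. f x \<le> f y"
        using x(2) \<open>?P \<subseteq> ?P'\<close> by blast
      ultimately show ?thesis
        using via_face x(1) by simp
    qed
  next
    case False
    then obtain x where x: "x \<in> ?P'" "f x < L"
      by (meson not_le)
    have "g x < b"
    proof (rule ccontr)
      assume "\<not> g x < b"
      then have "x \<in> ?P"
        using x(1) k by (simp add: solution_set_def)
      then show False
        using x(2) insert.prems(4) by fastforce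
    qed
    moreover have "\<forall>y\<in>?P. f x \<le> f y"
      using x(2) insert.prems(4) by fastforce
    ultimately show ?thesis
      using via_face x(1) by blast
  qed
qed

lemma triples_subset_NN: "triples m Js \<subseteq> NN m Js \<times> NN m Js \<times> NN m Js"
  by (auto simp: triples_def NN_def)

lemma triple_parts_in_NN:
  assumes "t \<in> triples m Js"
  shows "tail1 t \<in> NN m Js" "tail2 t \<in> NN m Js" "head t \<in> NN m Js"
  using subsetD[OF triples_subset_NN assms] by (auto simp: tail1_def tail2_def head_def)

lemma finite_NN: "\<forall>i\<in>{1..m}. finite (Js i) \<Longrightarrow> finite (NN m Js)"
  unfolding NN_def by (rule finite_UN_I) auto

lemma finite_triples: "finite (NN m Js) \<Longrightarrow> finite (triples m Js)"
  using triples_subset_NN by (rule finite_subset) simp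

definition D_lhs :: "nat \<Rightarrow> (nat \<Rightarrow> real) \<Rightarrow> (nat \<Rightarrow> nat set) \<Rightarrow> (triple \<Rightarrow> real) \<Rightarrow>
    (triple \<Rightarrow> real) \<Rightarrow> (triple \<Rightarrow> real) \<Rightarrow> (nat set \<Rightarrow> real) \<Rightarrow> nat set \<Rightarrow> real" where
  "D_lhs m alpha Js l1 l2 l3 mu J =
     beta m alpha Js J
     + (\<Sum>t\<in>{t\<in>triples m Js. tail1 t = J}. - l1 t + l3 t)
     + (\<Sum>t\<in>{t\<in>triples m Js. tail2 t = J}. - l2 t + l3 t)
     + (\<Sum>t\<in>{t\<in>triples m Js. head t = J}. l1 t + l2 t - l3 t)
     + mu J"

lemma D_feasible_iff:
  "D_feasible m alpha Js l1 l2 l3 mu \<longleftrightarrow>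
     (\<forall>t\<in>triples m Js. 0 \<le> l1 t \<and> 0 \<le> l2 t \<and> 0 \<le> l3 t) \<and> (\<forall>J\<in>NN m Js. 0 \<le> mu J) \<and>
     (\<forall>J\<in>NN m Js. 0 \<le> D_lhs m alpha Js l1 l2 l3 mu J)"
  by (simp add: D_feasible_def D_lhs_def)

lemma D_feasible_zero_lambda: "D_feasible m alpha Js (\<lambda>_. 0) (\<lambda>_. 0) (\<lambda>_. 0) (\<lambda>J. max 0 (- beta m alpha Js J))"
  by (simp add: D_feasible_def max_def)

lemma D_obj_nonpos:
  assumes "D_feasible m alpha Js l1 l2 l3 mu" "\<forall>t\<in>triples m Js. v t \<le> 1"
  shows "D_obj m Js v l1 l2 l3 mu \<le> 0"
proof -
  have "0 \<le> (\<Sum>t\<in>triples m Js. (1 - v t) * (l1 t + l2 t) + (2 - v t) * l3 t)"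
    using assms by (intro sum_nonneg) (auto simp: D_feasible_def)
  moreover have "0 \<le> (\<Sum>J\<in>NN m Js. mu J)"
    using assms by (intro sum_nonneg) (auto simp: D_feasible_def)
  ultimately show ?thesis
    by (simp add: D_obj_def)
qed

text \<open>The variables lambda_{t,1}, lambda_{t,2}, lambda_{t,3}, mu_J of D(v) as one index type,
  so that a candidate solution is a single point \<open>D_var \<Rightarrow> real\<close>.\<close>

datatype D_var = L1 triple | L2 triple | L3 triple | Mu "nat set"

lemma D_optimal_exists:
  assumes "finite (NN m Js)" "\<forall>t\<in>triples m Js. v t \<le> 1"
  shows "\<exists>l1 l2 l3 mu. D_optimal m alpha Js v l1 l2 l3 mu"
proof -
  let ?Tr = "triples m Js" and ?N = "NN m Js"
  let ?feasible = "\<lambda>x. D_feasible m alpha Js (\<lambda>t. x (L1 t)) (\<lambda>t. x (L2 t)) (\<lambda>t. x (L3 t)) (\<lambda>J. x (Mu J))"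
  define C :: "(((D_var \<Rightarrow> real) \<Rightarrow> real) \<times> real) set" where
    "C = (\<lambda>t. (\<lambda>x. x (L1 t), 0)) ` ?Tr \<union> (\<lambda>t. (\<lambda>x. x (L2 t), 0)) ` ?Tr
       \<union> (\<lambda>t. (\<lambda>x. x (L3 t), 0)) ` ?Tr \<union> (\<lambda>J. (\<lambda>x. x (Mu J), 0)) ` ?N
       \<union> (\<lambda>J. (\<lambda>x. D_lhs m alpha Js (\<lambda>t. x (L1 t)) (\<lambda>t. x (L2 t)) (\<lambda>t. x (L3 t)) (\<lambda>J. x (Mu J)) J, 0)) ` ?N"
  define f where
    "f x = - D_obj m Js v (\<lambda>t. x (L1 t)) (\<lambda>t. x (L2 t)) (\<lambda>t. x (L3 t)) (\<lambda>J. x (Mu J))" for x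
  have solution_set_C: "x \<in> solution_set C {} \<longleftrightarrow> ?feasible x" for x
    by (simp add: solution_set_def C_def D_feasible_iff ball_Un ball_conj_distrib conj_ac)
  have "finite C"
    using assms(1) finite_triples by (simp add: C_def)
  moreover have "\<forall>(g, b)\<in>C \<union> {}. affine_fun g"
    unfolding C_def D_lhs_def by (auto intro!: affine_fun_intros)
  moreover have "affine_fun f"
    unfolding f_def D_obj_def by (intro affine_fun_intros)
  moreover have "?feasible (case_D_var (\<lambda>_. 0) (\<lambda>_. 0) (\<lambda>_. 0) (\<lambda>J. max 0 (- beta m alpha Js J)))"
    using D_feasible_zero_lambda by simp
  then have "solution_set C {} \<noteq> {}"
    using solution_set_C by blast
  moreover have "\<forall>x\<in>solution_set C {}. 0 \<le> f x"
    using solution_set_C D_obj_nonpos assms(2) by (simp add: f_def)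
  ultimately obtain x where x: "x \<in> solution_set C {}" "\<forall>y\<in>solution_set C {}. f x \<le> f y"
    using affine_fun_attains_min[of C "{}" f 0] by blast
  have "D_optimal m alpha Js v (\<lambda>t. x (L1 t)) (\<lambda>t. x (L2 t)) (\<lambda>t. x (L3 t)) (\<lambda>J. x (Mu J))"
    unfolding D_optimal_def
  proof (intro conjI allI impI)
    fix l1 l2 l3 mu
    assume "D_feasible m alpha Js l1 l2 l3 mu"
    then have "case_D_var l1 l2 l3 mu \<in> solution_set C {}"
      using solution_set_C by simp
    then have "f x \<le> f (case_D_var l1 l2 l3 mu)"
      using x(2) by blast
    then show "D_obj m Js v l1 l2 l3 mu \<le> D_obj m Js v (\<lambda>t. x (L1 t)) (\<lambda>t. x (L2 t)) (\<lambda>t. x (L3 t)) (\<lambda>J. x (Mu J))"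
      by (simp add: f_def)
  qed (use x(1) solution_set_C in blast)
  then show ?thesis
    by blast
qed

definition mu_transfer :: "nat \<Rightarrow> (nat \<Rightarrow> nat set) \<Rightarrow> (triple \<Rightarrow> real) \<Rightarrow> (triple \<Rightarrow> real) \<Rightarrow>
    (triple \<Rightarrow> real) \<Rightarrow> nat set \<Rightarrow> real" where
  "mu_transfer m Js d1 d2 d3 J =
     (\<Sum>t\<in>{t\<in>triples m Js. head t = J}. d1 t + d2 t)
     + (\<Sum>t\<in>{t\<in>triples m Js. tail1 t = J}. d3 t)
     + (\<Sum>t\<in>{t\<in>triples m Js. tail2 t = J}. d3 t)"

lemma D_lhs_transfer:
  "D_lhs m alpha Js (\<lambda>t. l1 t - d1 t) (\<lambda>t. l2 t - d2 t) (\<lambda>t. l3 t - d3 t)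
       (\<lambda>J. mu J + mu_transfer m Js d1 d2 d3 J) J
   = D_lhs m alpha Js l1 l2 l3 mu J + (\<Sum>t\<in>{t\<in>triples m Js. tail1 t = J}. d1 t)
       + (\<Sum>t\<in>{t\<in>triples m Js. tail2 t = J}. d2 t) + (\<Sum>t\<in>{t\<in>triples m Js. head t = J}. d3 t)"
  by (simp add: D_lhs_def mu_transfer_def sum.distrib sum_subtractf algebra_simps)

lemma D_feasible_transfer:
  assumes "D_feasible m alpha Js l1 l2 l3 mu"
    and "\<forall>t\<in>triples m Js. d1 t \<in> {0..l1 t} \<and> d2 t \<in> {0..l2 t} \<and> d3 t \<in> {0..l3 t}"
  shows "D_feasible m alpha Js (\<lambda>t. l1 t - d1 t) (\<lambda>t. l2 t - d2 t) (\<lambda>t. l3 t - d3 t)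
           (\<lambda>J. mu J + mu_transfer m Js d1 d2 d3 J)"
  unfolding D_feasible_iff D_lhs_transfer
proof (intro conjI ballI)
  fix J
  have "0 \<le> mu_transfer m Js d1 d2 d3 J"
    using assms(2) by (auto simp: mu_transfer_def intro!: sum_nonneg add_nonneg_nonneg)
  moreover assume "J \<in> NN m Js"
  ultimately show "0 \<le> mu J + mu_transfer m Js d1 d2 d3 J"
    using assms(1) by (simp add: D_feasible_iff)
  have "0 \<le> (\<Sum>t\<in>{t\<in>triples m Js. tail1 t = J}. d1 t)"
    "0 \<le> (\<Sum>t\<in>{t\<in>triples m Js. tail2 t = J}. d2 t)"
    "0 \<le> (\<Sum>t\<in>{t\<in>triples m Js. head t = J}. d3 t)"
    using assms(2) by (auto intro!: sum_nonneg)
  then show "0 \<le> D_lhs m alpha Js l1 l2 l3 mu J + (\<Sum>t\<in>{t\<in>triples m Js. tail1 t = J}. d1 t)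
       + (\<Sum>t\<in>{t\<in>triples m Js. tail2 t = J}. d2 t) + (\<Sum>t\<in>{t\<in>triples m Js. head t = J}. d3 t)"
    using assms(1) \<open>J \<in> NN m Js\<close> by (simp add: D_feasible_iff)
qed (use assms in auto)

lemma sum_mu_transfer:
  assumes "finite (NN m Js)"
  shows "(\<Sum>J\<in>NN m Js. mu_transfer m Js d1 d2 d3 J) = (\<Sum>t\<in>triples m Js. d1 t + d2 t + 2 * d3 t)"
proof -
  have fibres: "(\<Sum>J\<in>NN m Js. \<Sum>t\<in>{t\<in>triples m Js. p t = J}. d t) = (\<Sum>t\<in>triples m Js. d t)"
    if "p ` triples m Js \<subseteq> NN m Js" for p and d :: "triple \<Rightarrow> real"
    using sum.group[OF finite_triples[OF assms] assms that] by simp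
  have "p ` triples m Js \<subseteq> NN m Js" if "p \<in> {head, tail1, tail2}" for p
    using that triple_parts_in_NN by blast
  then show ?thesis
    by (simp add: mu_transfer_def sum.distrib fibres sum_distrib_left[symmetric])
qed

lemma D_obj_transfer:
  assumes "finite (NN m Js)"
  shows "D_obj m Js v (\<lambda>t. l1 t - d1 t) (\<lambda>t. l2 t - d2 t) (\<lambda>t. l3 t - d3 t)
           (\<lambda>J. mu J + mu_transfer m Js d1 d2 d3 J)
         = D_obj m Js v l1 l2 l3 mu - (\<Sum>t\<in>triples m Js. v t * (d1 t + d2 t + d3 t))"
proof -
  have "(\<Sum>t\<in>triples m Js. (1 - v t) * (l1 t - d1 t + (l2 t - d2 t)) + (2 - v t) * (l3 t - d3 t))
    = (\<Sum>t\<in>triples m Js. ((1 - v t) * (l1 t + l2 t) + (2 - v t) * l3 t)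
         - (d1 t + d2 t + 2 * d3 t) + v t * (d1 t + d2 t + d3 t))"
    by (rule sum.cong) (simp_all add: algebra_simps)
  then show ?thesis
    using sum_mu_transfer[OF assms]
    by (simp add: D_obj_def sum.distrib sum_subtractf)
qed

lemma D_optimal_transfer:
  assumes "finite (NN m Js)" "D_optimal m alpha Js v l1 l2 l3 mu"
    and "\<forall>t\<in>triples m Js. d1 t \<in> {0..l1 t} \<and> d2 t \<in> {0..l2 t} \<and> d3 t \<in> {0..l3 t}"
    and "\<forall>t\<in>triples m Js. v t * (d1 t + d2 t + d3 t) = 0"
  shows "D_optimal m alpha Js v (\<lambda>t. l1 t - d1 t) (\<lambda>t. l2 t - d2 t) (\<lambda>t. l3 t - d3 t)
           (\<lambda>J. mu J + mu_transfer m Js d1 d2 d3 J)"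
proof -
  have "(\<Sum>t\<in>triples m Js. v t * (d1 t + d2 t + d3 t)) = 0"
    using assms(4) by (intro sum.neutral) blast
  then show ?thesis
    using assms(2,3) D_feasible_transfer[of m alpha Js l1 l2 l3 mu d1 d2 d3]
    by (simp add: D_optimal_def D_obj_transfer[OF assms(1)])
qed

theorem lemma3:
  fixes n m :: nat and alpha :: "nat \<Rightarrow> real" and Js :: "nat \<Rightarrow> nat set"
    and T :: "triple set"
  assumes "\<forall>i\<in>{1..m}. Js i \<noteq> {} \<and> Js i \<subseteq> {1..n}"
    and "proper_triple_set m Js T"
  shows "\<exists>l1 l2 l3 mu. D_optimal m alpha Js (indicator_vec T) l1 l2 l3 mu \<and>
           (\<forall>t\<in>triples m Js. indicator_vec T t = 0 \<longrightarrow> l1 t = 0 \<and> l2 t = 0 \<and> l3 t = 0)"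
proof -
  have fin: "finite (NN m Js)"
    using assms(1) finite_subset by (intro finite_NN) blast
  obtain l1 l2 l3 mu where opt: "D_optimal m alpha Js (indicator_vec T) l1 l2 l3 mu"
    using D_optimal_exists[OF fin] by (fastforce simp: indicator_vec_def)
  define off :: "(triple \<Rightarrow> real) \<Rightarrow> triple \<Rightarrow> real" where
    "off l t = (if t \<in> T then 0 else l t)" for l t
  have "\<forall>t\<in>triples m Js. off l1 t \<in> {0..l1 t} \<and> off l2 t \<in> {0..l2 t} \<and> off l3 t \<in> {0..l3 t}"
    using opt by (auto simp: off_def D_optimal_def D_feasible_def)
  moreover have "\<forall>t\<in>triples m Js. indicator_vec T t * (off l1 t + off l2 t + off l3 t) = 0"
    by (simp add: off_def indicator_vec_def)
  ultimately have "D_optimal m alpha Js (indicator_vec T)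
      (\<lambda>t. l1 t - off l1 t) (\<lambda>t. l2 t - off l2 t) (\<lambda>t. l3 t - off l3 t)
      (\<lambda>J. mu J + mu_transfer m Js (off l1) (off l2) (off l3) J)"
    using D_optimal_transfer[OF fin opt] by blast
  moreover have "\<forall>t. indicator_vec T t = 0 \<longrightarrow>
      l1 t - off l1 t = 0 \<and> l2 t - off l2 t = 0 \<and> l3 t - off l3 t = 0"
    by (simp add: off_def indicator_vec_def)
  ultimately show ?thesis
    by blast
qed

end
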